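(* Let $\Omega\subset\mathbb{R}^N$ be a Lipschitz open set, $s\in(1/2,1)$, $N>2s$, and let $\phi:\mathbb{R}\to\mathbb{R}$ be a Lipschitz convex function with $\phi(0)=0$. Then for every $u\in H^s_0(\Omega)$, $$(-\Delta)^s_\Omega\phi(u)\leq\phi'(u)(-\Delta)^s_\Omega u\quad\text{weakly in }\Omega.$$
   Context: $c_{N,s}$ is the standard normalization constant of the fractional Laplacian; $Q_{N,s,\Omega}(u)=\frac{c_{N,s}}{2}\int_\Omega\int_\Omega\frac{(u(x)-u(y))^2}{|x-y|^{N+2s}}dxdy$; $H^s_0(\Omega)$ is the completion of $C^\infty_c(\Omega)$ in the norm $(\|u\|_{L^2(\Omega)}^2+Q_{N,s,\Omega}(u))^{1/2}$. The regional fractional Laplacian is $(-\Delta)^s_\Omega u(x)=c_{N,s}\,\mathrm{P.V.}\int_\Omega\frac{u(x)-u(y)}{|x-y|^{N+2s}}dy$, $x\in\Omega$, understood in the weak sense through the bilinear form $\frac{c_{N,s}}{2}\int_\Omega\int_\Omega\frac{(u(x)-u(y))(\varphi(x)-\varphi(y))}{|x-y|^{N+2s}}dxdy$ tested against nonnegative test functions. Lipschitz open set: each boundary point has a neighbourhood described by a bi-Lipschitz map from a cylinder $B_r\times(-r,r)$ ($B_r$ an $(N-1)$-ball) sending the upper half into $\Omega$ and the flat part into $\partial\Omega$. *)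

theory Defs
  imports "HOL-Analysis.Analysis"
begin

fun Ck_fun :: "nat \<Rightarrow> ('a::euclidean_space \<Rightarrow> real) \<Rightarrow> bool" where
  "Ck_fun 0 f = continuous_on UNIV f"
| "Ck_fun (Suc k) f =
     ((\<forall>x. f differentiable (at x)) \<and>
      (\<forall>v. Ck_fun k (\<lambda>x. frechet_derivative f (at x) v)))"

definition smooth_fun :: "('a::euclidean_space \<Rightarrow> real) \<Rightarrow> bool" where
  "smooth_fun f \<longleftrightarrow> (\<forall>k. Ck_fun k f)"

definition test_fun :: "'a::euclidean_space set \<Rightarrow> ('a \<Rightarrow> real) \<Rightarrow> bool" where
  "test_fun \<Omega> f \<longleftrightarrow> smooth_fun f \<and> compact (closure {x. f x \<noteq> 0})
                     \<and> closure {x. f x \<noteq> 0} \<subseteq> \<Omega>"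

text \<open>The cylinder B_r x (-r,r), where the last coordinate is the direction e
  (a basis vector) and B_r is the (N-1)-ball in the hyperplane orthogonal to e.\<close>
definition cyl :: "'a::euclidean_space \<Rightarrow> real \<Rightarrow> 'a set" where
  "cyl e r = {z. norm (z - (z \<bullet> e) *\<^sub>R e) < r \<and> \<bar>z \<bullet> e\<bar> < r}"

definition bi_lipschitz_on :: "'a::metric_space set \<Rightarrow> ('a \<Rightarrow> 'b::metric_space) \<Rightarrow> bool" where
  "bi_lipschitz_on C \<Phi> \<longleftrightarrow>
     (\<exists>L>0. \<forall>x\<in>C. \<forall>y\<in>C. dist x y \<le> L * dist (\<Phi> x) (\<Phi> y)
                          \<and> dist (\<Phi> x) (\<Phi> y) \<le> L * dist x y)"

definition lipschitz_open_set :: "'a::euclidean_space set \<Rightarrow> bool" where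
  "lipschitz_open_set \<Omega> \<longleftrightarrow> open \<Omega> \<and>
     (\<forall>p\<in>frontier \<Omega>. \<exists>U (e::'a) r \<Phi>. open U \<and> p \<in> U \<and> e \<in> Basis \<and> r > 0 \<and>
        bij_betw \<Phi> (cyl e r) U \<and> bi_lipschitz_on (cyl e r) \<Phi> \<and>
        \<Phi> ` (cyl e r \<inter> {z. z \<bullet> e > 0}) = U \<inter> \<Omega> \<and>
        \<Phi> ` (cyl e r \<inter> {z. z \<bullet> e = 0}) = U \<inter> frontier \<Omega>)"

definition c_Ns :: "nat \<Rightarrow> real \<Rightarrow> real" where
  "c_Ns N s = s * 2 powr (2 * s) * Gamma ((real N + 2 * s) / 2)
              / (pi powr (real N / 2) * Gamma (1 - s))"

definition Qform :: "real \<Rightarrow> 'a::euclidean_space set \<Rightarrow> ('a \<Rightarrow> real) \<Rightarrow> ennreal" where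
  "Qform s \<Omega> u = ennreal (c_Ns DIM('a) s / 2) *
     (\<integral>\<^sup>+ z. indicator (\<Omega> \<times> \<Omega>) z *
        ennreal ((u (fst z) - u (snd z))\<^sup>2 / norm (fst z - snd z) powr (real DIM('a) + 2 * s))
      \<partial>(lebesgue \<Otimes>\<^sub>M lebesgue))"

definition L2sq :: "'a::euclidean_space set \<Rightarrow> ('a \<Rightarrow> real) \<Rightarrow> ennreal" where
  "L2sq \<Omega> u = (\<integral>\<^sup>+ x. indicator \<Omega> x * ennreal ((u x)\<^sup>2) \<partial>lebesgue)"

text \<open>H^s_0(Omega): completion of C_c^infinity(Omega) in the norm
  (||u||_{L^2}^2 + Q(u))^{1/2}; its elements are realised as (Lebesgue measurable)
  functions on Omega that are limits of test functions in this norm.\<close>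
definition Hs0 :: "real \<Rightarrow> 'a::euclidean_space set \<Rightarrow> ('a \<Rightarrow> real) set" where
  "Hs0 s \<Omega> = {u. u \<in> borel_measurable lebesgue \<and>
     (\<exists>f. (\<forall>n. test_fun \<Omega> (f n)) \<and>
          ((\<lambda>n. L2sq \<Omega> (\<lambda>x. f n x - u x) + Qform s \<Omega> (\<lambda>x. f n x - u x)) \<longlongrightarrow> 0) sequentially)}"

definition Btrunc :: "real \<Rightarrow> 'a::euclidean_space set \<Rightarrow> real \<Rightarrow> ('a \<Rightarrow> real) \<Rightarrow> ('a \<Rightarrow> real) \<Rightarrow> real" where
  "Btrunc s \<Omega> \<epsilon> v w = c_Ns DIM('a) s / 2 *
     (\<integral> z. indicator (\<Omega> \<times> \<Omega> \<inter> {z. dist (fst z) (snd z) > \<epsilon>}) z *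
        ((v (fst z) - v (snd z)) * (w (fst z) - w (snd z))
          / norm (fst z - snd z) powr (real DIM('a) + 2 * s))
      \<partial>(lebesgue \<Otimes>\<^sub>M lebesgue))"

text \<open>The bilinear form, taken in the principal value sense (liminf of the
  truncations as eps -> 0+, in the extended reals).\<close>
definition Bpv :: "real \<Rightarrow> 'a::euclidean_space set \<Rightarrow> ('a \<Rightarrow> real) \<Rightarrow> ('a \<Rightarrow> real) \<Rightarrow> ereal" where
  "Bpv s \<Omega> v w = Liminf (at_right 0) (\<lambda>\<epsilon>. ereal (Btrunc s \<Omega> \<epsilon> v w))"

end

theory Submission
  imports Defs
begin

text \<open>For \<open>\<psi> \<ge> 0\<close>, the subgradient inequalities of \<open>\<phi>\<close> at \<open>u x\<close> and at \<open>u y\<close>, weighted by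
  \<open>\<psi> x\<close> and \<open>\<psi> y\<close>, add up to the pointwise bound
  \<open>(\<phi> (u x) - \<phi> (u y)) (\<psi> x - \<psi> y) \<le> (u x - u y) (\<phi>' (u x) \<psi> x - \<phi>' (u y) \<psi> y)\<close>.
  Integrating it against the kernel \<open>|x - y| powr (-N - 2s)\<close> over \<open>|x - y| > \<epsilon>\<close> compares every truncation
  of the two bilinear forms, and the liminf as \<open>\<epsilon> \<rightarrow> 0\<close> preserves the comparison. Both truncated
  integrands are integrable (otherwise their Bochner integrals would be the junk value 0): the
  functions involved are in \<open>L\<^sup>2(\<Omega>)\<close>, and away from the diagonal the kernel is integrable in
  one variable uniformly in the other, by summing over dyadic shells. So only openness of \<open>\<Omega>\<close>,
  \<open>0 < s < 1\<close> and \<open>u \<in> L\<^sup>2(\<Omega>)\<close> are used.\<close>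

lemma subgradient_mono:
  fixes \<phi> \<phi>' :: "real \<Rightarrow> real"
  assumes subgrad: "\<And>t y. \<phi> t + \<phi>' t * (y - t) \<le> \<phi> y"
  shows "mono \<phi>'"
proof (rule monoI)
  fix t y :: real
  assume "t \<le> y"
  have "(\<phi>' t - \<phi>' y) * (y - t) \<le> 0"
    using subgrad[of t y] subgrad[of y t] by (simp add: algebra_simps)
  with \<open>t \<le> y\<close> show "\<phi>' t \<le> \<phi>' y"
    by (cases "t = y") (auto simp: mult_le_0_iff)
qed

lemma subgradient_abs_le_lipschitz:
  fixes \<phi> \<phi>' :: "real \<Rightarrow> real"
  assumes lip: "L-lipschitz_on UNIV \<phi>" and subgrad: "\<And>t y. \<phi> t + \<phi>' t * (y - t) \<le> \<phi> y"
  shows "\<bar>\<phi>' t\<bar> \<le> L"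
proof -
  have lip_abs: "\<bar>\<phi> a - \<phi> b\<bar> \<le> L * \<bar>a - b\<bar>" for a b
    using lipschitz_onD[OF lip, of a b] by (simp add: dist_real_def)
  have "\<phi>' t \<le> L"
    using subgrad[of t "t + 1"] lip_abs[of "t + 1" t] by (simp add: abs_le_iff)
  moreover have "- \<phi>' t \<le> L"
    using subgrad[of t "t - 1"] lip_abs[of "t - 1" t] by (simp add: abs_le_iff)
  ultimately show ?thesis by linarith
qed

lemma subgradient_cross_le:
  fixes \<phi> \<phi>' :: "real \<Rightarrow> real"
  assumes subgrad: "\<And>t y. \<phi> t + \<phi>' t * (y - t) \<le> \<phi> y" and "0 \<le> \<alpha>" and "0 \<le> \<beta>"
  shows "(\<phi> a - \<phi> b) * (\<alpha> - \<beta>) \<le> (a - b) * (\<phi>' a * \<alpha> - \<phi>' b * \<beta>)"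
proof -
  have "0 \<le> \<alpha> * (\<phi> b - \<phi> a - \<phi>' a * (b - a))" and "0 \<le> \<beta> * (\<phi> a - \<phi> b - \<phi>' b * (a - b))"
    using subgrad[of a b] subgrad[of b a] assms(2,3) by simp_all
  then show ?thesis by (simp add: algebra_simps)
qed

definition square_integrable_on :: "'a::euclidean_space set \<Rightarrow> ('a \<Rightarrow> real) \<Rightarrow> bool" where
  "square_integrable_on \<Omega> f \<longleftrightarrow> f \<in> borel_measurable lebesgue \<and> L2sq \<Omega> f < \<infinity>"

lemma square_integrable_on_dominated:
  assumes "square_integrable_on \<Omega> h" and "g \<in> borel_measurable lebesgue"
    and "\<Omega> \<in> sets lebesgue" and "\<And>x. \<bar>g x\<bar> \<le> c * \<bar>h x\<bar>"
  shows "square_integrable_on \<Omega> g"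
proof -
  have [measurable]: "h \<in> borel_measurable lebesgue" "\<Omega> \<in> sets lebesgue"
    using assms unfolding square_integrable_on_def by auto
  have "(g x)\<^sup>2 \<le> c\<^sup>2 * (h x)\<^sup>2" for x
    using power_mono[OF assms(4)[of x] abs_ge_zero, of 2] by (simp add: power_mult_distrib)
  then have "L2sq \<Omega> g \<le> (\<integral>\<^sup>+x. ennreal (c\<^sup>2) * (indicator \<Omega> x * ennreal ((h x)\<^sup>2)) \<partial>lebesgue)"
    unfolding L2sq_def
    by (intro nn_integral_mono) (auto simp: indicator_def ennreal_mult[symmetric] ennreal_leI)
  also have "\<dots> = ennreal (c\<^sup>2) * L2sq \<Omega> h"
    unfolding L2sq_def by (rule nn_integral_cmult) measurable
  also have "\<dots> < \<infinity>"
    using assms(1) by (simp add: square_integrable_on_def ennreal_mult_less_top)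
  finally show ?thesis using assms(2) unfolding square_integrable_on_def by blast
qed

lemma square_integrable_on_diff:
  assumes "square_integrable_on \<Omega> f" and "square_integrable_on \<Omega> g" and "\<Omega> \<in> sets lebesgue"
  shows "square_integrable_on \<Omega> (\<lambda>x. f x - g x)"
proof -
  have [measurable]: "f \<in> borel_measurable lebesgue" "g \<in> borel_measurable lebesgue" "\<Omega> \<in> sets lebesgue"
    using assms unfolding square_integrable_on_def by auto
  have "ennreal ((f x - g x)\<^sup>2) \<le> 2 * ennreal ((f x)\<^sup>2) + 2 * ennreal ((g x)\<^sup>2)" for x
  proof -
    have "(f x - g x)\<^sup>2 \<le> 2 * (f x)\<^sup>2 + 2 * (g x)\<^sup>2"
      using zero_le_power2[of "f x + g x"] by (simp add: power2_diff power2_sum)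
    then have "ennreal ((f x - g x)\<^sup>2) \<le> ennreal (2 * (f x)\<^sup>2 + 2 * (g x)\<^sup>2)"
      by (rule ennreal_leI)
    also have "\<dots> = 2 * ennreal ((f x)\<^sup>2) + 2 * ennreal ((g x)\<^sup>2)"
      by (subst ennreal_plus) (simp_all add: ennreal_mult')
    finally show ?thesis .
  qed
  then have "L2sq \<Omega> (\<lambda>x. f x - g x)
      \<le> (\<integral>\<^sup>+x. 2 * (indicator \<Omega> x * ennreal ((f x)\<^sup>2)) + 2 * (indicator \<Omega> x * ennreal ((g x)\<^sup>2)) \<partial>lebesgue)"
    unfolding L2sq_def by (intro nn_integral_mono) (auto simp: indicator_def)
  also have "\<dots> = 2 * L2sq \<Omega> f + 2 * L2sq \<Omega> g"
    unfolding L2sq_def by (simp add: nn_integral_add nn_integral_cmult)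
  also have "\<dots> < \<infinity>"
    using assms by (simp add: square_integrable_on_def ennreal_mult_less_top)
  finally show ?thesis unfolding square_integrable_on_def by simp
qed

lemma test_fun_continuous: "test_fun \<Omega> f \<Longrightarrow> continuous_on UNIV f"
  by (metis Ck_fun.simps(1) smooth_fun_def test_fun_def)

lemma test_fun_square_integrable:
  assumes "test_fun \<Omega> f"
  shows "square_integrable_on \<Omega> f"
proof -
  define S where "S = closure {x. f x \<noteq> 0}"
  have cont: "continuous_on UNIV f" using assms by (rule test_fun_continuous)
  have S: "compact S" using assms unfolding test_fun_def S_def by blast
  have outside: "f x = 0" if "x \<notin> S" for x
    using closure_subset[of "{x. f x \<noteq> 0}"] that unfolding S_def by blast
  have "bounded (f ` S)"
    using compact_imp_bounded[OF compact_continuous_image[OF continuous_on_subset[OF cont] S]] by simp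
  then obtain M where M: "\<And>x. x \<in> S \<Longrightarrow> \<bar>f x\<bar> \<le> M"
    unfolding bounded_iff by (metis image_eqI real_norm_def)
  have "L2sq \<Omega> f \<le> (\<integral>\<^sup>+x. ennreal (M\<^sup>2) * indicator S x \<partial>lebesgue)"
    unfolding L2sq_def
  proof (rule nn_integral_mono)
    fix x
    show "indicator \<Omega> x * ennreal ((f x)\<^sup>2) \<le> ennreal (M\<^sup>2) * indicator S x"
    proof (cases "x \<in> S")
      case True
      then have "(f x)\<^sup>2 \<le> M\<^sup>2" using power_mono[OF M abs_ge_zero, of x 2] by simp
      then show ?thesis using True by (auto simp: indicator_def ennreal_leI)
    qed (simp add: outside)
  qed
  also have "\<dots> = ennreal (M\<^sup>2) * emeasure lebesgue S"
    using S by (intro nn_integral_cmult_indicator) (simp add: compact_imp_closed)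
  also have "\<dots> < \<infinity>"
    using S emeasure_compact_finite[OF S] by (simp add: compact_imp_closed ennreal_mult_less_top)
  finally show ?thesis
    using borel_measurable_continuous_onI[OF cont]
    unfolding square_integrable_on_def measurable_lborel2[symmetric]
    by (blast intro: measurable_completion)
qed

lemma Hs0_square_integrable:
  assumes "u \<in> Hs0 s \<Omega>" and "\<Omega> \<in> sets lebesgue"
  shows "square_integrable_on \<Omega> u"
proof -
  obtain f where f: "\<And>n. test_fun \<Omega> (f n)" and u: "u \<in> borel_measurable lebesgue"
    and lim: "((\<lambda>n. L2sq \<Omega> (\<lambda>x. f n x - u x) + Qform s \<Omega> (\<lambda>x. f n x - u x)) \<longlongrightarrow> 0) sequentially"
    using assms(1) unfolding Hs0_def by blast
  obtain n where n: "L2sq \<Omega> (\<lambda>x. f n x - u x) + Qform s \<Omega> (\<lambda>x. f n x - u x) < 1"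
    using order_tendstoD(2)[OF lim, of 1] by (auto dest: eventually_happens)
  have "L2sq \<Omega> (\<lambda>x. f n x - u x) \<le> L2sq \<Omega> (\<lambda>x. f n x - u x) + Qform s \<Omega> (\<lambda>x. f n x - u x)"
    by simp
  also note n
  also note ennreal_one_less_top
  finally have "L2sq \<Omega> (\<lambda>x. f n x - u x) < \<infinity>" by simp
  moreover have "(\<lambda>x. f n x - u x) \<in> borel_measurable lebesgue"
    using test_fun_square_integrable[OF f] u
    unfolding square_integrable_on_def by (intro borel_measurable_diff) auto
  ultimately have "square_integrable_on \<Omega> (\<lambda>x. f n x - u x)"
    unfolding square_integrable_on_def by blast
  from square_integrable_on_diff[OF test_fun_square_integrable[OF f[of n]] this assms(2)]
  show ?thesis by simp
qed

lemma dyadic_shell_exists: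
  fixes d e :: real
  assumes "0 < e" and "e < d"
  obtains k :: nat where "2 ^ k * e \<le> d" and "d < 2 ^ Suc k * e"
proof -
  obtain n :: nat where "d / e < 2 ^ n" using real_arch_pow[of 2 "d / e"] by auto
  then have "d < 2 ^ n * e" using assms by (simp add: field_simps)
  moreover have "\<not> d < 2 ^ 0 * e" using assms by simp
  ultimately obtain k where "\<not> d < 2 ^ k * e" and "d < 2 ^ Suc k * e"
    using exists_least_lemma[of "\<lambda>n. d < 2 ^ n * e"] by blast
  then show ?thesis by (intro that[of k]) (simp_all add: not_less)
qed

lemma nn_integral_kernel_outside_ball_le:
  fixes x :: "'a::euclidean_space"
  assumes e: "0 < e" and p: "real DIM('a) < p"
  shows "(\<integral>\<^sup>+y. indicator {y. e < dist x y} y * ennreal (1 / norm (x - y) powr p) \<partial>lebesgue)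
     \<le> ennreal (unit_ball_vol (real DIM('a)) * 2 ^ DIM('a) * e powr (real DIM('a) - p)
                 / (1 - 2 powr (real DIM('a) - p)))"
proof -
  define N where "N = real DIM('a)"
  define V where "V = unit_ball_vol N"
  define q where "q = 2 powr (N - p)"
  define S where "S k = {y. 2 ^ k * e \<le> dist x y \<and> dist x y < 2 ^ Suc k * e}" for k :: nat
  define g where "g y = ennreal (1 / norm (x - y) powr p)" for y
  define a where "a k = V * 2 powr N * e powr (N - p) * q ^ k" for k :: nat
  have V: "0 \<le> V" unfolding V_def N_def by simp
  have q: "0 < q" "q < 1" unfolding q_def using p N_def by (auto intro!: powr_less_one)
  have S_sets[measurable]: "S k \<in> sets lborel" for k unfolding S_def by measurable
  have cover: "indicator {y. e < dist x y} y \<le> (\<Sum>k. indicator (S k) y :: ennreal)" for y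
  proof (cases "e < dist x y")
    case True
    then obtain k where "y \<in> S k" using dyadic_shell_exists[OF e] unfolding S_def by blast
    then show ?thesis
      using True sum_le_suminf[OF summableI, of "{k}" "\<lambda>k. indicator (S k) y :: ennreal"] by simp
  qed simp
  have shell_le: "(\<integral>\<^sup>+y. indicator (S k) y * g y \<partial>lborel) \<le> ennreal (a k)" for k
  proof -
    have "(\<integral>\<^sup>+y. indicator (S k) y * g y \<partial>lborel)
        \<le> (\<integral>\<^sup>+y. ennreal ((2 ^ k * e) powr (-p)) * indicator (S k) y \<partial>lborel)"
    proof (intro nn_integral_mono)
      fix y
      show "indicator (S k) y * g y \<le> ennreal ((2 ^ k * e) powr (-p)) * indicator (S k) y"
      proof (cases "y \<in> S k")
        case True
        then have "2 ^ k * e \<le> norm (x - y)" unfolding S_def by (simp add: dist_norm)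
        then have "norm (x - y) powr (-p) \<le> (2 ^ k * e) powr (-p)"
          using e p by (intro powr_mono2') auto
        then show ?thesis using True unfolding g_def by (simp add: powr_minus_divide ennreal_leI)
      qed simp
    qed
    also have "\<dots> = ennreal ((2 ^ k * e) powr (-p)) * emeasure lborel (S k)"
      by (rule nn_integral_cmult_indicator) (use S_sets in simp)
    also have "\<dots> \<le> ennreal ((2 ^ k * e) powr (-p)) * emeasure lborel (cball x (2 ^ Suc k * e))"
      by (intro mult_left_mono emeasure_mono) (auto simp: S_def)
    also have "\<dots> = ennreal ((2 ^ k * e) powr (-p) * (V * (2 ^ Suc k * e) ^ DIM('a)))"
      using e by (subst emeasure_cball) (auto simp: V_def N_def ennreal_mult)
    also have "(2 ^ k * e) powr (-p) * (V * (2 ^ Suc k * e) ^ DIM('a)) = a k"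
    proof -
      have ball: "(2 ^ Suc k * e) ^ DIM('a) = 2 powr N * (2 powr real k) powr N * e powr N"
        using e by (simp add: N_def powr_realpow[symmetric] powr_mult powr_add)
      have kernel: "(2 ^ k * e) powr (-p) = (2 powr real k) powr (-p) * e powr (-p)"
        using e by (simp add: powr_mult powr_realpow)
      have ratio: "q ^ k = (2 powr real k) powr N * (2 powr real k) powr (-p)"
        unfolding q_def
        by (simp add: powr_powr powr_add[symmetric] powr_realpow[symmetric] algebra_simps flip: powr_power)
      show ?thesis unfolding a_def ball kernel ratio by (simp add: powr_diff powr_minus divide_simps)
    qed
    finally show ?thesis .
  qed
  have "(\<integral>\<^sup>+y. indicator {y. e < dist x y} y * g y \<partial>lebesgue)
      = (\<integral>\<^sup>+y. indicator {y. e < dist x y} y * g y \<partial>lborel)"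
    unfolding g_def by (rule nn_integral_completion) measurable
  also have "\<dots> \<le> (\<integral>\<^sup>+y. (\<Sum>k. indicator (S k) y * g y) \<partial>lborel)"
    using cover by (intro nn_integral_mono) (simp add: ennreal_suminf_multc mult_right_mono)
  also have "\<dots> = (\<Sum>k. \<integral>\<^sup>+y. indicator (S k) y * g y \<partial>lborel)"
    by (rule nn_integral_suminf) (simp add: g_def)
  also have "\<dots> \<le> (\<Sum>k. ennreal (a k))"
    by (intro suminf_le shell_le) auto
  also have "\<dots> = ennreal (\<Sum>k. a k)"
    using q V by (intro suminf_ennreal2) (auto simp: a_def intro!: summable_mult summable_geometric)
  also have "(\<Sum>k. a k) = V * 2 powr N * e powr (N - p) / (1 - q)"
    unfolding a_def using q by (simp add: suminf_mult suminf_geometric divide_simps)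
  finally show ?thesis unfolding V_def N_def q_def g_def by (simp add: powr_realpow)
qed

lemma sigma_finite_lebesgue: "sigma_finite_measure (lebesgue :: 'a::euclidean_space measure)"
proof -
  obtain A :: "'a set set" where A: "countable A" "A \<subseteq> sets lborel" "\<Union>A = space lborel"
    "\<forall>a\<in>A. emeasure lborel a \<noteq> \<infinity>"
    using lborel.sigma_finite_countable by blast
  show ?thesis
    by standard (use A in \<open>auto intro!: exI[of _ A] simp: sets.sets_into_space\<close>)
qed

interpretation lebesgue_pair: pair_sigma_finite "lebesgue :: 'a::euclidean_space measure" lebesgue
  by (simp add: pair_sigma_finite_def sigma_finite_lebesgue)

lemma measurable_fst_lebesgue_borel[measurable]:
  "fst \<in> borel_measurable (lebesgue \<Otimes>\<^sub>M (lebesgue :: 'a::euclidean_space measure))"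
  by (rule measurable_compose[OF measurable_fst]) (rule measurable_completion, simp)

lemma measurable_snd_lebesgue_borel[measurable]:
  "snd \<in> borel_measurable ((lebesgue :: 'a::euclidean_space measure) \<Otimes>\<^sub>M lebesgue)"
  by (rule measurable_compose[OF measurable_snd]) (rule measurable_completion, simp)

lemma sets_dist_greater_lebesgue_pair[measurable]:
  "{z::'a::euclidean_space \<times> 'a. e < dist (fst z) (snd z)} \<in> sets (lebesgue \<Otimes>\<^sub>M lebesgue)"
proof -
  have "(\<lambda>z::'a \<times> 'a. dist (fst z) (snd z)) \<in> borel_measurable (lebesgue \<Otimes>\<^sub>M lebesgue)"
    by measurable
  then show ?thesis
    unfolding borel_measurable_iff_greater by (simp add: space_pair_measure)
qed

lemma nn_integral_truncated_kernel_finite: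
  fixes H :: "'a::euclidean_space \<Rightarrow> ennreal"
  assumes e: "0 < e" and p: "real DIM('a) < p"
    and H[measurable]: "H \<in> borel_measurable lebesgue" and H_finite: "integral\<^sup>N lebesgue H < \<infinity>"
  shows "(\<integral>\<^sup>+z. indicator {z. e < dist (fst z) (snd z)} z * ennreal (1 / norm (fst z - snd z) powr p)
            * (H (fst z) + H (snd z)) \<partial>(lebesgue \<Otimes>\<^sub>M lebesgue)) < \<infinity>"
proof -
  define k where "k z = indicator {z. e < dist (fst z) (snd z)} z * ennreal (1 / norm (fst z - snd z) powr p)"
    for z :: "'a \<times> 'a"
  define C where "C = unit_ball_vol (real DIM('a)) * 2 ^ DIM('a) * e powr (real DIM('a) - p)
                      / (1 - 2 powr (real DIM('a) - p))"
  have k[measurable]: "k \<in> borel_measurable (lebesgue \<Otimes>\<^sub>M lebesgue)"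
    unfolding k_def by measurable
  have k_fst: "(\<integral>\<^sup>+y. k (x, y) \<partial>lebesgue) \<le> ennreal C" for x
    using nn_integral_kernel_outside_ball_le[OF e p, of x] unfolding k_def C_def
    by (simp add: indicator_def)
  have k_snd: "(\<integral>\<^sup>+x. k (x, y) \<partial>lebesgue) \<le> ennreal C" for y
    using nn_integral_kernel_outside_ball_le[OF e p, of y] unfolding k_def C_def
    by (simp add: indicator_def dist_commute norm_minus_commute)
  have "(\<integral>\<^sup>+z. k z * (H (fst z) + H (snd z)) \<partial>(lebesgue \<Otimes>\<^sub>M lebesgue))
      = (\<integral>\<^sup>+z. k z * H (fst z) \<partial>(lebesgue \<Otimes>\<^sub>M lebesgue))
        + (\<integral>\<^sup>+z. k z * H (snd z) \<partial>(lebesgue \<Otimes>\<^sub>M lebesgue))"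
    by (simp add: distrib_left nn_integral_add)
  also have "(\<integral>\<^sup>+z. k z * H (fst z) \<partial>(lebesgue \<Otimes>\<^sub>M lebesgue))
      = (\<integral>\<^sup>+x. H x * (\<integral>\<^sup>+y. k (x, y) \<partial>lebesgue) \<partial>lebesgue)"
    by (simp add: sigma_finite_measure.nn_integral_fst[OF sigma_finite_lebesgue, symmetric]
        nn_integral_cmult[symmetric] mult.commute)
  also have "\<dots> \<le> integral\<^sup>N lebesgue H * ennreal C"
    using k_fst by (simp add: nn_integral_multc[symmetric] nn_integral_mono mult_left_mono)
  also have "(\<integral>\<^sup>+z. k z * H (snd z) \<partial>(lebesgue \<Otimes>\<^sub>M lebesgue))
      = (\<integral>\<^sup>+y. H y * (\<integral>\<^sup>+x. k (x, y) \<partial>lebesgue) \<partial>lebesgue)"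
    by (simp add: lebesgue_pair.nn_integral_snd[symmetric] nn_integral_cmult[symmetric] mult.commute)
  also have "\<dots> \<le> integral\<^sup>N lebesgue H * ennreal C"
    using k_snd by (simp add: nn_integral_multc[symmetric] nn_integral_mono mult_left_mono)
  also have "integral\<^sup>N lebesgue H * ennreal C + integral\<^sup>N lebesgue H * ennreal C < \<infinity>"
    using H_finite by (simp add: ennreal_mult_less_top)
  finally show ?thesis unfolding k_def by (simp add: add_mono)
qed

lemma integrable_truncated_form:
  fixes \<Omega> :: "'a::euclidean_space set" and v w :: "'a \<Rightarrow> real"
  assumes \<Omega>[measurable]: "\<Omega> \<in> sets lebesgue" and e: "0 < e" and p: "real DIM('a) < p"
    and v: "square_integrable_on \<Omega> v" and w: "square_integrable_on \<Omega> w"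
  shows "integrable (lebesgue \<Otimes>\<^sub>M lebesgue) (\<lambda>z. indicator (\<Omega> \<times> \<Omega> \<inter> {z. dist (fst z) (snd z) > e}) z *
        ((v (fst z) - v (snd z)) * (w (fst z) - w (snd z)) / norm (fst z - snd z) powr p))"
    (is "integrable _ ?F")
proof -
  have [measurable]: "v \<in> borel_measurable lebesgue" "w \<in> borel_measurable lebesgue"
    using v w unfolding square_integrable_on_def by auto
  define H where "H x = indicator \<Omega> x * ennreal ((v x)\<^sup>2) + indicator \<Omega> x * ennreal ((w x)\<^sup>2)" for x
  have H_finite: "integral\<^sup>N lebesgue H < \<infinity>"
    using v w unfolding H_def square_integrable_on_def L2sq_def by (simp add: nn_integral_add)
  have "ennreal (norm (?F z)) \<le> indicator {z. e < dist (fst z) (snd z)} z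
          * ennreal (1 / norm (fst z - snd z) powr p) * (H (fst z) + H (snd z))" for z
  proof (cases "z \<in> \<Omega> \<times> \<Omega> \<inter> {z. dist (fst z) (snd z) > e}")
    case True
    obtain x y where z: "z = (x, y)" by fastforce
    with True have xy: "x \<in> \<Omega>" "y \<in> \<Omega>" "e < dist x y" by auto
    have amgm: "\<bar>a * b\<bar> \<le> (a\<^sup>2 + b\<^sup>2) / 2" for a b :: real
      using zero_le_power2[of "\<bar>a\<bar> - \<bar>b\<bar>"] by (simp add: power2_diff abs_mult algebra_simps)
    have "\<bar>(v x - v y) * (w x - w y)\<bar> \<le> ((v x - v y)\<^sup>2 + (w x - w y)\<^sup>2) / 2"
      by (rule amgm)
    also have "\<dots> \<le> ((v x)\<^sup>2 + (w x)\<^sup>2) + ((v y)\<^sup>2 + (w y)\<^sup>2)"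
      using zero_le_power2[of "v x + v y"] zero_le_power2[of "w x + w y"]
      by (simp add: power2_diff power2_sum algebra_simps)
    finally have "norm (?F z) \<le> (((v x)\<^sup>2 + (w x)\<^sup>2) + ((v y)\<^sup>2 + (w y)\<^sup>2)) / norm (x - y) powr p"
      using xy z by (simp add: divide_right_mono)
    then show ?thesis
      using xy unfolding z H_def
      by (simp add: ennreal_mult[symmetric] ennreal_plus[symmetric] divide_inverse ennreal_leI mult.commute
          del: ennreal_plus)
  qed simp
  then have "(\<integral>\<^sup>+z. ennreal (norm (?F z)) \<partial>(lebesgue \<Otimes>\<^sub>M lebesgue)) < \<infinity>"
    by (rule le_less_trans[OF nn_integral_mono nn_integral_truncated_kernel_finite[OF e p _ H_finite]])
       (unfold H_def, measurable)
  then show ?thesis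
    by (intro integrableI_bounded) measurable
qed

lemma c_Ns_nonneg: "0 < s \<Longrightarrow> s < 1 \<Longrightarrow> 0 \<le> c_Ns N s"
  unfolding c_Ns_def
  by (intro divide_nonneg_nonneg mult_nonneg_nonneg less_imp_le[OF Gamma_real_pos]) auto

lemma Btrunc_subgradient_le:
  fixes \<Omega> :: "'a::euclidean_space set" and u \<psi> :: "'a \<Rightarrow> real" and \<phi> \<phi>' :: "real \<Rightarrow> real"
  assumes \<Omega>: "\<Omega> \<in> sets lebesgue" and e: "0 < e" and s: "0 < s" "s < 1"
    and lip: "L-lipschitz_on UNIV \<phi>" and "\<phi> 0 = 0" and subgrad: "\<And>t y. \<phi> t + \<phi>' t * (y - t) \<le> \<phi> y"
    and u: "square_integrable_on \<Omega> u" and \<psi>: "square_integrable_on \<Omega> \<psi>" and \<psi>_nonneg: "\<And>x. 0 \<le> \<psi> x"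
  shows "Btrunc s \<Omega> e (\<lambda>x. \<phi> (u x)) \<psi> \<le> Btrunc s \<Omega> e u (\<lambda>x. \<phi>' (u x) * \<psi> x)"
proof -
  have [measurable]: "u \<in> borel_measurable lebesgue" "\<psi> \<in> borel_measurable lebesgue"
    using u \<psi> unfolding square_integrable_on_def by auto
  have "(\<lambda>x. \<phi> (u x)) \<in> borel_measurable lebesgue"
    by (rule measurable_compose[OF _ borel_measurable_continuous_onI[OF lipschitz_on_continuous_on[OF lip]]])
       simp
  moreover have "\<bar>\<phi> t\<bar> \<le> L * \<bar>t\<bar>" for t
    using lipschitz_onD[OF lip, of t 0] \<open>\<phi> 0 = 0\<close> by (simp add: dist_real_def)
  ultimately have \<phi>u: "square_integrable_on \<Omega> (\<lambda>x. \<phi> (u x))"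
    using square_integrable_on_dominated[OF u _ \<Omega>] by blast
  have "(\<lambda>x. \<phi>' (u x)) \<in> borel_measurable lebesgue"
    by (rule measurable_compose[OF _ borel_measurable_mono[OF subgradient_mono[OF subgrad]]]) simp
  then have "(\<lambda>x. \<phi>' (u x) * \<psi> x) \<in> borel_measurable lebesgue"
    by measurable
  moreover have "\<bar>\<phi>' (u x) * \<psi> x\<bar> \<le> L * \<bar>\<psi> x\<bar>" for x
    using subgradient_abs_le_lipschitz[OF lip subgrad]
    by (simp add: abs_mult mult_right_mono)
  ultimately have \<phi>'u\<psi>: "square_integrable_on \<Omega> (\<lambda>x. \<phi>' (u x) * \<psi> x)"
    using square_integrable_on_dominated[OF \<psi> _ \<Omega>] by blast
  have p: "real DIM('a) < real DIM('a) + 2 * s" using s by simp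
  show ?thesis
    unfolding Btrunc_def
    using integrable_truncated_form[OF \<Omega> e p \<phi>u \<psi>] integrable_truncated_form[OF \<Omega> e p u \<phi>'u\<psi>]
    by (intro mult_left_mono[OF _ divide_nonneg_pos[OF c_Ns_nonneg[OF s]]] integral_mono
          mult_left_mono[OF divide_right_mono] subgradient_cross_le[OF subgrad \<psi>_nonneg \<psi>_nonneg])
       simp_all
qed

lemma Bpv_mono:
  assumes "\<And>e. 0 < e \<Longrightarrow> Btrunc s \<Omega> e v w \<le> Btrunc s \<Omega> e v' w'"
  shows "Bpv s \<Omega> v w \<le> Bpv s \<Omega> v' w'"
  unfolding Bpv_def
  by (intro Liminf_mono eventually_mono[OF eventually_at_right_less[of 0]]) (simp add: assms)

theorem proposition2p2:
  fixes \<Omega> :: "'a::euclidean_space set"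
    and s :: real and \<phi> :: "real \<Rightarrow> real" and \<phi>' :: "real \<Rightarrow> real"
    and u :: "'a \<Rightarrow> real"
  assumes "lipschitz_open_set \<Omega>"
    and "1/2 < s" and "s < 1" and "2 * s < real DIM('a)"
    and "\<exists>L. L-lipschitz_on UNIV \<phi>"
    and "convex_on UNIV \<phi>"
    and "\<phi> 0 = 0"
    and "\<forall>t y. \<phi> t + \<phi>' t * (y - t) \<le> \<phi> y"
    and "u \<in> Hs0 s \<Omega>"
  shows "\<forall>\<psi>. test_fun \<Omega> \<psi> \<and> (\<forall>x. 0 \<le> \<psi> x) \<longrightarrow>
           Bpv s \<Omega> (\<lambda>x. \<phi> (u x)) \<psi> \<le> Bpv s \<Omega> u (\<lambda>x. \<phi>' (u x) * \<psi> x)"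
proof (intro allI impI)
  fix \<psi> :: "'a \<Rightarrow> real"
  assume \<psi>: "test_fun \<Omega> \<psi> \<and> (\<forall>x. 0 \<le> \<psi> x)"
  have \<Omega>: "\<Omega> \<in> sets lebesgue"
    using assms(1) by (simp add: lipschitz_open_set_def)
  obtain L where lip: "L-lipschitz_on UNIV \<phi>"
    using assms(5) by blast
  have s: "0 < s" "s < 1"
    using assms(2,3) by simp_all
  show "Bpv s \<Omega> (\<lambda>x. \<phi> (u x)) \<psi> \<le> Bpv s \<Omega> u (\<lambda>x. \<phi>' (u x) * \<psi> x)"
    using \<psi> assms(7,8)
    by (intro Bpv_mono Btrunc_subgradient_le[OF \<Omega> _ s lip]
          Hs0_square_integrable[OF assms(9) \<Omega>] test_fun_square_integrable) auto
qed

end
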